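(* Let $\hat{\mathbb{N}}$ be the set of odd integers $n\ge3$, and let $X,Y \subseteq \hat{\mathbb{N}}$ be non-empty. Then $\bigcap_{n \in X} \mathrm{pPol}\, R^{0,2}_n = \bigcap_{m \in Y} \mathrm{pPol}\, R^{0,2}_m$ if and only if $X = Y$.
   Context: Partial functions are on $\{0,1\}$: an $n$-ary partial function is a map $f:\operatorname{dom} f\to\{0,1\}$ with $\operatorname{dom} f\subseteq\{0,1\}^n$. For $\rho\subseteq\{0,1\}^h$, $\mathrm{pPol}\,\rho$ is the set of partial functions $f$ such that for every $h\times n$ matrix whose rows lie in $\operatorname{dom} f$ and whose columns lie in $\rho$, the column obtained by applying $f$ row-wise lies in $\rho$. Let $\rho_{0,2}=\{(0,0),(0,1),(1,0)\}$. For $n\ge2$, $R^{0,2}_{C,n}=\{(x_1,\dots,x_n)\in\{0,1\}^n: (x_i,x_{i+1})\in\rho_{0,2}\text{ for } i\in[n], \text{ with } x_{n+1}:=x_1\}$, $R^{0,2}_{K,n}=\{(x_1,\dots,x_n): (x_i,x_j)\in\rho_{0,2}\text{ for all } i\ne j\}$, and $R^{0,2}_n=R^{0,2}_{C,n}\times R^{0,2}_{K,n}\subseteq\{0,1\}^{2n}$. *)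

theory Defs
  imports Main
begin

text \<open>Tuples in {0,1}^n are represented as bool lists of length n (False = 0, True = 1).
  An n-ary partial function is a pair (n, f) with f :: bool list \<rightharpoonup> bool whose
  domain is contained in the set of lists of length n.\<close>

type_synonym pfun = "nat \<times> (bool list \<Rightarrow> bool option)"

definition is_pfun :: "pfun \<Rightarrow> bool" where
  "is_pfun F \<longleftrightarrow> dom (snd F) \<subseteq> {xs. length xs = fst F}"

text \<open>pPol of an h-ary relation rho (a set of bool lists of length h).
  A matrix with h rows is given as M :: nat \<Rightarrow> bool list (rows M 0, ..., M (h-1)).\<close>

definition pPol :: "nat \<Rightarrow> bool list set \<Rightarrow> pfun set" where
  "pPol h rho = {F. is_pfun F \<and>
     (\<forall>M :: nat \<Rightarrow> bool list.
        (\<forall>i<h. M i \<in> dom (snd F)) \<longrightarrow>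
        (\<forall>j<fst F. map (\<lambda>i. M i ! j) [0..<h] \<in> rho) \<longrightarrow>
        map (\<lambda>i. the (snd F (M i))) [0..<h] \<in> rho)}"

definition rho02 :: "bool list set" where
  "rho02 = {[False, False], [False, True], [True, False]}"

definition R02C :: "nat \<Rightarrow> bool list set" where
  "R02C n = {xs. length xs = n \<and>
     (\<forall>i<n. [xs ! i, xs ! ((i + 1) mod n)] \<in> rho02)}"

definition R02K :: "nat \<Rightarrow> bool list set" where
  "R02K n = {xs. length xs = n \<and>
     (\<forall>i<n. \<forall>j<n. i \<noteq> j \<longrightarrow> [xs ! i, xs ! j] \<in> rho02)}"

text \<open>R^{0,2}_n = R_C \<times> R_K \<subseteq> {0,1}^{2n}, as concatenation of tuples.\<close>

definition R02 :: "nat \<Rightarrow> bool list set" where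
  "R02 n = {xs @ ys | xs ys. xs \<in> R02C n \<and> ys \<in> R02K n}"

definition Nhat :: "nat set" where
  "Nhat = {n. odd n \<and> 3 \<le> n}"

end

theory Submission imports Defs begin

text \<open>Applying a partial function row-wise to a matrix with columns in \<open>R02 m\<close> amounts to
  feeding it \<open>2 m\<close> rows in which cyclically consecutive rows of the first half, and distinct rows
  of the second half, are bitwise disjoint. For \<open>n \<ge> 3\<close> we build a partial function on \<open>2 n\<close>
  vectors: \<open>n\<close> pairwise disjoint clique vectors sent to 0 and \<open>n\<close> cycle vectors sent to 1, where
  two cycle vectors are disjoint iff their indices are adjacent on the \<open>n\<close>-cycle and no clique
  vector is disjoint from a cycle vector. The \<open>n\<close> cycle vectors followed by the \<open>n\<close> clique
  vectors show that it is not in \<open>pPol R02 n\<close>. For odd \<open>m \<noteq> n\<close> the \<open>m\<close> pairwise disjoint rows of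
  the second half force \<open>m < n\<close>, and they are clique vectors since the \<open>n\<close>-cycle has no triangle;
  the first half is an odd closed walk of length \<open>m < n\<close>, impossible on the \<open>n\<close>-cycle, so it
  consists of clique vectors too. Hence the output is constantly 0 and lies in \<open>R02 m\<close>, so the
  function separates \<open>n\<close> from every other index.\<close>

section \<open>Columns of R02 and polymorphisms\<close>

text \<open>The conditions defining \<open>R02 m\<close> on positions \<open>0..<2 m\<close>, with an arbitrary
  compatibility relation between positions in place of \<open>rho02\<close>.\<close>

definition R02_shape :: "nat \<Rightarrow> (nat \<Rightarrow> nat \<Rightarrow> bool) \<Rightarrow> bool" where
  "R02_shape m D \<longleftrightarrow> (\<forall>i<m. D i (Suc i mod m)) \<and> (\<forall>i<m. \<forall>i'<m. i \<noteq> i' \<longrightarrow> D (m + i) (m + i'))"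

lemma R02_shape_cong:
  assumes "\<And>i i'. i < 2 * m \<Longrightarrow> i' < 2 * m \<Longrightarrow> D i i' = D' i i'"
  shows "R02_shape m D = R02_shape m D'"
proof -
  have "Suc i mod m < 2 * m" if "i < m" for i
  proof -
    have "Suc i mod m < m" using that by simp
    then show ?thesis by simp
  qed
  then show ?thesis
    using assms by (auto simp: R02_shape_def)
qed

lemma R02_shape_all: "R02_shape m (\<lambda>i i'. \<forall>j<N. D j i i') \<longleftrightarrow> (\<forall>j<N. R02_shape m (D j))"
  by (auto simp: R02_shape_def)

lemma rho02_iff: "[a, b] \<in> rho02 \<longleftrightarrow> \<not> (a \<and> b)"
  by (cases a; cases b) (auto simp: rho02_def)

lemma R02_iff: "v \<in> R02 m \<longleftrightarrow> length v = 2 * m \<and> R02_shape m (\<lambda>i i'. \<not> (v ! i \<and> v ! i'))"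
proof
  assume "v \<in> R02 m"
  then obtain xs ys where v: "v = xs @ ys" and xs: "xs \<in> R02C m" and ys: "ys \<in> R02K m"
    by (auto simp: R02_def)
  have "length xs = m" "length ys = m" using xs ys by (auto simp: R02C_def R02K_def)
  then show "length v = 2 * m \<and> R02_shape m (\<lambda>i i'. \<not> (v ! i \<and> v ! i'))"
    using xs ys by (auto simp: v R02_shape_def R02C_def R02K_def rho02_iff nth_append)
next
  assume v: "length v = 2 * m \<and> R02_shape m (\<lambda>i i'. \<not> (v ! i \<and> v ! i'))"
  have "take m v \<in> R02C m" "drop m v \<in> R02K m"
    using v by (auto simp: R02_shape_def R02C_def R02K_def rho02_iff)
  then show "v \<in> R02 m"
    unfolding R02_def by (metis (mono_tags, lifting) append_take_drop_id mem_Collect_eq)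
qed

lemma map_upt_in_R02_iff: "map f [0..<2 * m] \<in> R02 m \<longleftrightarrow> R02_shape m (\<lambda>i i'. \<not> (f i \<and> f i'))"
  unfolding R02_iff by (auto intro!: R02_shape_cong)

definition bits_disjoint :: "bool list \<Rightarrow> bool list \<Rightarrow> bool" where
  "bits_disjoint u v \<longleftrightarrow> (\<forall>p<length u. \<not> (u ! p \<and> v ! p))"

lemma pPol_R02_iff:
  "F \<in> pPol (2 * m) (R02 m) \<longleftrightarrow> is_pfun F \<and>
     (\<forall>M. (\<forall>i<2 * m. M i \<in> dom (snd F)) \<longrightarrow>
          R02_shape m (\<lambda>i i'. bits_disjoint (M i) (M i')) \<longrightarrow>
          R02_shape m (\<lambda>i i'. \<not> (the (snd F (M i)) \<and> the (snd F (M i')))))"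
proof -
  have columns: "(\<forall>j<fst F. map (\<lambda>i. M i ! j) [0..<2 * m] \<in> R02 m)
      \<longleftrightarrow> R02_shape m (\<lambda>i i'. bits_disjoint (M i) (M i'))"
    if "is_pfun F" "\<forall>i<2 * m. M i \<in> dom (snd F)" for M
  proof -
    have "length (M i) = fst F" if "i < 2 * m" for i
      using \<open>is_pfun F\<close> \<open>\<forall>i<2 * m. M i \<in> dom (snd F)\<close> that by (force simp: is_pfun_def)
    then have "R02_shape m (\<lambda>i i'. bits_disjoint (M i) (M i'))
        \<longleftrightarrow> R02_shape m (\<lambda>i i'. \<forall>j<fst F. \<not> (M i ! j \<and> M i' ! j))"
      by (intro R02_shape_cong) (simp add: bits_disjoint_def)
    also have "\<dots> \<longleftrightarrow> (\<forall>j<fst F. map (\<lambda>i. M i ! j) [0..<2 * m] \<in> R02 m)"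
      unfolding R02_shape_all map_upt_in_R02_iff ..
    finally show ?thesis by simp
  qed
  have outputs: "map (\<lambda>i. the (snd F (M i))) [0..<2 * m] \<in> R02 m
      \<longleftrightarrow> R02_shape m (\<lambda>i i'. \<not> (the (snd F (M i)) \<and> the (snd F (M i'))))" for M
    by (rule map_upt_in_R02_iff)
  show ?thesis
    unfolding pPol_def mem_Collect_eq using columns outputs by blast
qed

section \<open>Walks on the n-cycle\<close>

definition cycle_adj :: "nat \<Rightarrow> nat \<Rightarrow> nat \<Rightarrow> bool" where
  "cycle_adj n x y \<longleftrightarrow> x + 1 = y \<or> y + 1 = x \<or> (x = 0 \<and> y + 1 = n) \<or> (y = 0 \<and> x + 1 = n)"

lemma cycle_adj_sym: "cycle_adj n x y \<Longrightarrow> cycle_adj n y x"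
  by (auto simp: cycle_adj_def)

lemma cycle_adj_irrefl: "2 \<le> n \<Longrightarrow> \<not> cycle_adj n x x"
  by (auto simp: cycle_adj_def)

lemma cycle_adj_Suc_mod:
  assumes "2 \<le> n" and "i < n"
  shows "cycle_adj n i (Suc i mod n)"
proof (cases "Suc i < n")
  case False
  then have "Suc i = n" using \<open>i < n\<close> by simp
  then show ?thesis using \<open>2 \<le> n\<close> by (auto simp: cycle_adj_def)
qed (auto simp: cycle_adj_def)

lemma cycle_adj_triangle_free:
  "4 \<le> n \<Longrightarrow> x < n \<Longrightarrow> y < n \<Longrightarrow> z < n \<Longrightarrow> cycle_adj n x y \<Longrightarrow> cycle_adj n y z \<Longrightarrow> \<not> cycle_adj n x z"
  unfolding cycle_adj_def by arith

text \<open>Lifting a walk to the integers: after \<open>l\<close> steps the walk has moved by some \<open>s\<close> with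
  \<open>|s| \<le> l\<close> and \<open>s \<equiv> l (mod 2)\<close>, modulo multiples of \<open>n\<close>.\<close>

lemma cycle_walk_displacement:
  assumes "\<forall>i<l. cycle_adj n (x i) (x (Suc i))"
  shows "\<exists>s t::int. int (x l) = int (x 0) + s + int n * t \<and> \<bar>s\<bar> \<le> int l \<and> even (s + int l)"
  using assms
proof (induction l)
  case 0
  show ?case by (intro exI[of _ 0]) simp
next
  case (Suc l)
  then obtain s t where st: "int (x l) = int (x 0) + s + int n * t" "\<bar>s\<bar> \<le> int l" "even (s + int l)"
    by auto
  have "cycle_adj n (x l) (x (Suc l))" using Suc.prems by auto
  then consider "x l + 1 = x (Suc l)" | "x (Suc l) + 1 = x l" | "x l = 0" "x (Suc l) + 1 = n"
    | "x (Suc l) = 0" "x l + 1 = n"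
    unfolding cycle_adj_def by fastforce
  then show ?case
  proof cases
    case 1 then show ?thesis using st by (intro exI[of _ "s + 1"] exI[of _ t]) auto
  next
    case 2 then show ?thesis using st by (intro exI[of _ "s - 1"] exI[of _ t]) auto
  next
    case 3 then show ?thesis using st by (intro exI[of _ "s - 1"] exI[of _ "t + 1"]) (auto simp: algebra_simps)
  next
    case 4 then show ?thesis using st by (intro exI[of _ "s + 1"] exI[of _ "t - 1"]) (auto simp: algebra_simps)
  qed
qed

lemma no_short_odd_closed_walk:
  assumes "\<forall>i<m. cycle_adj n (x i) (x (Suc i))" and "x m = x 0" and "odd m" and "m < n"
  shows False
proof -
  obtain s t where st: "int (x m) = int (x 0) + s + int n * t" "\<bar>s\<bar> \<le> int m" "even (s + int m)"
    using cycle_walk_displacement[OF assms(1)] by blast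
  have s: "s = - (int n * t)" using st(1) assms(2) by simp
  have "t = 0"
  proof (rule ccontr)
    assume "t \<noteq> 0"
    then have "1 \<le> \<bar>t\<bar>" by simp
    then have "int n \<le> \<bar>int n * t\<bar>" by (simp add: abs_mult mult_le_cancel_left1)
    then show False using s st(2) assms(4) by simp
  qed
  then show False using s st(3) assms(3) by simp
qed

section \<open>The separating partial function\<close>

text \<open>Bit positions form two \<open>n \<times> n\<close> grids, position \<open>(x, y)\<close> being \<open>x * n + y\<close>. In the
  first grid \<open>clique_vec n k\<close> fills row \<open>k\<close> and \<open>cycle_vec n i\<close> fills column \<open>i\<close>, so clique
  vectors are pairwise disjoint and every clique vector meets every cycle vector. In the second grid \<open>(x, y)\<close> is set in \<open>cycle_vec n x\<close>
  and \<open>cycle_vec n y\<close> iff \<open>x, y\<close> are not adjacent, so two cycle vectors are disjoint iff their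
  indices are adjacent on the \<open>n\<close>-cycle.\<close>

definition clique_vec :: "nat \<Rightarrow> nat \<Rightarrow> bool list" where
  "clique_vec n k = map (\<lambda>p. p < n * n \<and> p div n = k) [0..<2 * n * n]"

definition cycle_vec :: "nat \<Rightarrow> nat \<Rightarrow> bool list" where
  "cycle_vec n i = map (\<lambda>p. (p < n * n \<and> p mod n = i) \<or>
     (n * n \<le> p \<and> ((p - n * n) div n = i \<or> (p - n * n) mod n = i)
        \<and> \<not> cycle_adj n ((p - n * n) div n) ((p - n * n) mod n))) [0..<2 * n * n]"

lemma length_clique_vec [simp]: "length (clique_vec n k) = 2 * n * n"
  by (simp add: clique_vec_def)

lemma length_cycle_vec [simp]: "length (cycle_vec n i) = 2 * n * n"
  by (simp add: cycle_vec_def)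

lemma nth_clique_vec: "p < 2 * n * n \<Longrightarrow> clique_vec n k ! p \<longleftrightarrow> p < n * n \<and> p div n = k"
  by (simp add: clique_vec_def)

lemma nth_cycle_vec: "p < 2 * n * n \<Longrightarrow> cycle_vec n i ! p \<longleftrightarrow> (p < n * n \<and> p mod n = i) \<or>
     (n * n \<le> p \<and> ((p - n * n) div n = i \<or> (p - n * n) mod n = i)
        \<and> \<not> cycle_adj n ((p - n * n) div n) ((p - n * n) mod n))"
  by (simp add: cycle_vec_def)

lemma grid_index_less:
  fixes n :: nat
  assumes "x < n" and "y < n"
  shows "x * n + y < n * n"
proof -
  have "x * n + y < (x + 1) * n" using assms by simp
  also have "\<dots> \<le> n * n" using assms(1) by (metis Suc_eq_plus1 Suc_leI mult_le_mono1)
  finally show ?thesis .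
qed

lemma not_bits_disjointI: "p < length u \<Longrightarrow> u ! p \<Longrightarrow> v ! p \<Longrightarrow> \<not> bits_disjoint u v"
  by (auto simp: bits_disjoint_def)

lemma bits_disjoint_clique_vec_iff:
  assumes "k < n" and "l < n"
  shows "bits_disjoint (clique_vec n k) (clique_vec n l) \<longleftrightarrow> k \<noteq> l"
proof
  assume "bits_disjoint (clique_vec n k) (clique_vec n l)"
  moreover have "k * n < n * n" using assms(1) by simp
  ultimately show "k \<noteq> l"
    using not_bits_disjointI[of "k * n" "clique_vec n k" "clique_vec n l"] by (auto simp: nth_clique_vec)
qed (auto simp: bits_disjoint_def nth_clique_vec)

lemma not_bits_disjoint_clique_cycle:
  assumes "k < n" and "i < n"
  shows "\<not> bits_disjoint (clique_vec n k) (cycle_vec n i)" "\<not> bits_disjoint (cycle_vec n i) (clique_vec n k)"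
proof -
  have p: "k * n + i < n * n" using grid_index_less[OF assms] .
  then have "k * n + i < length (clique_vec n k)" "k * n + i < length (cycle_vec n i)"
    by simp_all
  moreover have "clique_vec n k ! (k * n + i)" "cycle_vec n i ! (k * n + i)"
    using p assms by (auto simp: nth_clique_vec nth_cycle_vec)
  ultimately show "\<not> bits_disjoint (clique_vec n k) (cycle_vec n i)" "\<not> bits_disjoint (cycle_vec n i) (clique_vec n k)"
    using not_bits_disjointI by blast+
qed

lemma bits_disjoint_cycle_vec_iff:
  assumes "2 \<le> n" and "i < n" and "j < n"
  shows "bits_disjoint (cycle_vec n i) (cycle_vec n j) \<longleftrightarrow> cycle_adj n i j"
proof
  assume "bits_disjoint (cycle_vec n i) (cycle_vec n j)"
  moreover have p: "i * n + j < n * n" using grid_index_less[OF assms(2,3)] .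
  moreover have "(i * n + j) div n = i" "(i * n + j) mod n = j" using assms by auto
  ultimately show "cycle_adj n i j"
    using not_bits_disjointI[of "n * n + (i * n + j)" "cycle_vec n i" "cycle_vec n j"]
    by (auto simp: nth_cycle_vec)
next
  assume adj: "cycle_adj n i j"
  then have "i \<noteq> j" using cycle_adj_irrefl[OF assms(1)] by blast
  show "bits_disjoint (cycle_vec n i) (cycle_vec n j)"
    unfolding bits_disjoint_def
  proof (intro allI impI notI)
    fix p assume "p < length (cycle_vec n i)" and both: "cycle_vec n i ! p \<and> cycle_vec n j ! p"
    then have "p < 2 * n * n" by simp
    with both \<open>i \<noteq> j\<close> adj show False
      by (cases "p < n * n") (auto simp: nth_cycle_vec dest: cycle_adj_sym)
  qed
qed

lemma clique_vec_ne_cycle_vec: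
  assumes "2 \<le> n" and "i < n"
  shows "clique_vec n k \<noteq> cycle_vec n i"
proof -
  let ?p = "n * n + (i * n + i)"
  have p: "i * n + i < n * n" using grid_index_less[OF assms(2,2)] .
  have "cycle_vec n i ! ?p" using p assms cycle_adj_irrefl by (auto simp: nth_cycle_vec)
  moreover have "\<not> clique_vec n k ! ?p" using p by (auto simp: nth_clique_vec)
  ultimately show ?thesis by auto
qed

definition clique_vecs :: "nat \<Rightarrow> bool list set" where
  "clique_vecs n = clique_vec n ` {..<n}"

definition cycle_vecs :: "nat \<Rightarrow> bool list set" where
  "cycle_vecs n = cycle_vec n ` {..<n}"

definition separating_map :: "nat \<Rightarrow> bool list \<Rightarrow> bool option" where
  "separating_map n xs =
     (if xs \<in> clique_vecs n then Some False else if xs \<in> cycle_vecs n then Some True else None)"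

definition separating_pfun :: "nat \<Rightarrow> pfun" where
  "separating_pfun n = (2 * n * n, separating_map n)"

lemma dom_separating_map: "dom (separating_map n) = clique_vecs n \<union> cycle_vecs n"
  by (auto simp: separating_map_def dom_def split: if_splits)

lemma is_pfun_separating_pfun: "is_pfun (separating_pfun n)"
  by (auto simp: is_pfun_def separating_pfun_def dom_separating_map clique_vecs_def cycle_vecs_def)

lemma separating_map_clique_vec: "u \<in> clique_vecs n \<Longrightarrow> separating_map n u = Some False"
  by (simp add: separating_map_def)

lemma separating_map_cycle_vec: "2 \<le> n \<Longrightarrow> i < n \<Longrightarrow> separating_map n (cycle_vec n i) = Some True"
  using clique_vec_ne_cycle_vec by (fastforce simp: separating_map_def clique_vecs_def cycle_vecs_def)

lemma bits_disjoint_same_part: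
  assumes "u \<in> clique_vecs n \<union> cycle_vecs n" and "v \<in> clique_vecs n \<union> cycle_vecs n"
    and "bits_disjoint u v"
  shows "u \<in> clique_vecs n \<longleftrightarrow> v \<in> clique_vecs n"
  using assms not_bits_disjoint_clique_cycle by (auto simp: clique_vecs_def cycle_vecs_def)

lemma not_bits_disjoint_self:
  assumes "2 \<le> n" and "u \<in> clique_vecs n \<union> cycle_vecs n"
  shows "\<not> bits_disjoint u u"
  using assms bits_disjoint_clique_vec_iff bits_disjoint_cycle_vec_iff cycle_adj_irrefl
  by (auto simp: clique_vecs_def cycle_vecs_def)

lemma separating_pfun_not_in_pPol:
  assumes "2 \<le> n"
  shows "separating_pfun n \<notin> pPol (2 * n) (R02 n)"
proof
  assume "separating_pfun n \<in> pPol (2 * n) (R02 n)"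
  moreover define M where "M i = (if i < n then cycle_vec n i else clique_vec n (i - n))" for i
  moreover have "\<forall>i<2 * n. M i \<in> dom (snd (separating_pfun n))"
    by (auto simp: M_def separating_pfun_def dom_separating_map clique_vecs_def cycle_vecs_def)
  moreover have "R02_shape n (\<lambda>i i'. bits_disjoint (M i) (M i'))"
    using assms by (auto simp: R02_shape_def M_def bits_disjoint_clique_vec_iff
        bits_disjoint_cycle_vec_iff cycle_adj_Suc_mod)
  ultimately have "R02_shape n (\<lambda>i i'. \<not> (the (snd (separating_pfun n) (M i)) \<and> the (snd (separating_pfun n) (M i'))))"
    unfolding pPol_R02_iff by blast
  then have "\<not> (the (separating_map n (M 0)) \<and> the (separating_map n (M (Suc 0 mod n))))"
    using assms unfolding R02_shape_def separating_pfun_def snd_conv by (metis less_le_trans zero_less_numeral)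
  then show False
    using assms by (simp add: M_def separating_map_cycle_vec)
qed

lemma closed_walk_rows_in_clique_vecs:
  assumes "odd m" and "m < n"
    and rows: "\<forall>i<m. M i \<in> clique_vecs n \<union> cycle_vecs n"
    and walk: "\<forall>i<m. bits_disjoint (M i) (M (Suc i mod m))"
    and "i < m"
  shows "M i \<in> clique_vecs n"
proof -
  have same: "M i \<in> clique_vecs n \<longleftrightarrow> M 0 \<in> clique_vecs n" if "i < m" for i
    using that
  proof (induction i)
    case (Suc i)
    then have "bits_disjoint (M i) (M (Suc i))" using walk by (metis Suc_lessD mod_less)
    then show ?case using Suc bits_disjoint_same_part rows by (metis Suc_lessD)
  qed simp
  have "M 0 \<in> clique_vecs n"
  proof (rule ccontr)
    assume "M 0 \<notin> clique_vecs n"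
    moreover have "i mod m < m" for i
      using \<open>odd m\<close> by (simp add: odd_pos)
    ultimately have "\<exists>k<n. M (i mod m) = cycle_vec n k" for i
      using same rows by (fastforce simp: cycle_vecs_def)
    define x where "x i = (SOME k. k < n \<and> M (i mod m) = cycle_vec n k)" for i
    have x: "x i < n \<and> M (i mod m) = cycle_vec n (x i)" for i
      unfolding x_def using \<open>\<exists>k<n. M (i mod m) = cycle_vec n k\<close> by (rule someI_ex)
    have "2 \<le> n" using \<open>odd m\<close> \<open>m < n\<close> by (cases m) auto
    have "cycle_adj n (x i) (x (Suc i))" if "i < m" for i
    proof -
      have "M i = cycle_vec n (x i)" "M (Suc i mod m) = cycle_vec n (x (Suc i))"
        using x[of i] x[of "Suc i"] that by simp_all
      then have "bits_disjoint (cycle_vec n (x i)) (cycle_vec n (x (Suc i)))"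
        using walk that by metis
      then show ?thesis
        using bits_disjoint_cycle_vec_iff[OF \<open>2 \<le> n\<close>] x by blast
    qed
    moreover have "x m = x 0" by (simp add: x_def)
    ultimately show False
      using no_short_odd_closed_walk \<open>odd m\<close> \<open>m < n\<close> by blast
  qed
  then show ?thesis using same \<open>i < m\<close> by blast
qed

lemma clique_rows_same_part:
  fixes K :: "nat \<Rightarrow> bool list"
  assumes rows: "\<forall>i<m. K i \<in> clique_vecs n \<union> cycle_vecs n"
    and pairwise: "\<forall>i<m. \<forall>i'<m. i \<noteq> i' \<longrightarrow> bits_disjoint (K i) (K i')"
    and "i < m" and "i' < m"
  shows "K i \<in> clique_vecs n \<longleftrightarrow> K i' \<in> clique_vecs n"
proof (cases "i = i'")
  case False
  then show ?thesis
    using bits_disjoint_same_part rows pairwise \<open>i < m\<close> \<open>i' < m\<close> by blast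
qed simp

lemma clique_rows_le:
  fixes K :: "nat \<Rightarrow> bool list"
  assumes "2 \<le> n"
    and rows: "\<forall>i<m. K i \<in> clique_vecs n \<union> cycle_vecs n"
    and pairwise: "\<forall>i<m. \<forall>i'<m. i \<noteq> i' \<longrightarrow> bits_disjoint (K i) (K i')"
  shows "m \<le> n"
proof (cases "m = 0")
  case False
  have "inj_on K {..<m}"
  proof (rule inj_onI, rule ccontr)
    fix i i' assume "i \<in> {..<m}" "i' \<in> {..<m}" "K i = K i'" "i \<noteq> i'"
    then have "bits_disjoint (K i) (K i)" using pairwise by auto
    then show False using not_bits_disjoint_self[OF \<open>2 \<le> n\<close>] rows \<open>i \<in> {..<m}\<close> by blast
  qed
  then have "m = card (K ` {..<m})" by (simp add: card_image)
  also have "\<dots> \<le> card (if K 0 \<in> clique_vecs n then clique_vecs n else cycle_vecs n)"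
  proof (rule card_mono)
    show "finite (if K 0 \<in> clique_vecs n then clique_vecs n else cycle_vecs n)"
      by (simp add: clique_vecs_def cycle_vecs_def)
    show "K ` {..<m} \<subseteq> (if K 0 \<in> clique_vecs n then clique_vecs n else cycle_vecs n)"
    proof (rule image_subsetI)
      fix i assume "i \<in> {..<m}"
      then show "K i \<in> (if K 0 \<in> clique_vecs n then clique_vecs n else cycle_vecs n)"
        using clique_rows_same_part[OF rows pairwise, of i 0] rows False by auto
    qed
  qed
  also have "\<dots> \<le> n"
    unfolding clique_vecs_def cycle_vecs_def by (metis card_image_le card_lessThan finite_lessThan)
  finally show ?thesis .
qed simp

lemma clique_rows_in_clique_vecs:
  fixes K :: "nat \<Rightarrow> bool list"
  assumes "3 \<le> m" and "4 \<le> n"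
    and rows: "\<forall>i<m. K i \<in> clique_vecs n \<union> cycle_vecs n"
    and pairwise: "\<forall>i<m. \<forall>i'<m. i \<noteq> i' \<longrightarrow> bits_disjoint (K i) (K i')"
    and "i < m"
  shows "K i \<in> clique_vecs n"
proof (rule ccontr)
  assume "K i \<notin> clique_vecs n"
  then have "\<exists>k<n. K j = cycle_vec n k" if "j < m" for j
    using clique_rows_same_part[OF rows pairwise that \<open>i < m\<close>] rows that
    by (auto simp: cycle_vecs_def)
  moreover have "0 < m" "1 < m" "2 < m" using \<open>3 \<le> m\<close> by auto
  ultimately obtain x y z where xyz: "x < n" "y < n" "z < n"
    and "K 0 = cycle_vec n x" "K 1 = cycle_vec n y" "K 2 = cycle_vec n z"
    by meson
  moreover have "bits_disjoint (K 0) (K 1)" "bits_disjoint (K 1) (K 2)" "bits_disjoint (K 0) (K 2)"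
    using pairwise \<open>2 < m\<close> by auto
  ultimately have "cycle_adj n x y" "cycle_adj n y z" "cycle_adj n x z"
    using bits_disjoint_cycle_vec_iff \<open>4 \<le> n\<close> by simp_all
  then show False
    using cycle_adj_triangle_free[OF \<open>4 \<le> n\<close> xyz] by blast
qed

lemma separating_pfun_in_pPol:
  assumes "odd m" and "3 \<le> m" and "2 \<le> n" and "m \<noteq> n"
  shows "separating_pfun n \<in> pPol (2 * m) (R02 m)"
  unfolding pPol_R02_iff
proof (intro conjI is_pfun_separating_pfun allI impI)
  fix M :: "nat \<Rightarrow> bool list"
  assume "\<forall>i<2 * m. M i \<in> dom (snd (separating_pfun n))"
    and shape: "R02_shape m (\<lambda>i i'. bits_disjoint (M i) (M i'))"
  then have rows: "M i \<in> clique_vecs n \<union> cycle_vecs n" if "i < 2 * m" for i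
    using that by (simp add: separating_pfun_def dom_separating_map)
  have walk: "\<forall>i<m. bits_disjoint (M i) (M (Suc i mod m))"
    and pairwise: "\<forall>i<m. \<forall>i'<m. i \<noteq> i' \<longrightarrow> bits_disjoint (M (m + i)) (M (m + i'))"
    using shape by (simp_all add: R02_shape_def)
  have "m \<le> n"
    using clique_rows_le[OF \<open>2 \<le> n\<close> _ pairwise] rows by simp
  then have "m < n" using \<open>m \<noteq> n\<close> by simp
  have clique: "M i \<in> clique_vecs n" if "i < 2 * m" for i
  proof (cases "i < m")
    case True
    then show ?thesis
      using closed_walk_rows_in_clique_vecs[OF \<open>odd m\<close> \<open>m < n\<close> _ walk] rows by simp
  next
    case False
    define j where "j = i - m"
    have "i = m + j" "j < m" using False that by (simp_all add: j_def)
    have "4 \<le> n" using \<open>m < n\<close> \<open>3 \<le> m\<close> by simp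
    have "\<forall>j<m. M (m + j) \<in> clique_vecs n \<union> cycle_vecs n" using rows by simp
    from clique_rows_in_clique_vecs[OF \<open>3 \<le> m\<close> \<open>4 \<le> n\<close> this pairwise \<open>j < m\<close>]
    show ?thesis using \<open>i = m + j\<close> by simp
  qed
  have "R02_shape m (\<lambda>i i'. \<not> (the (snd (separating_pfun n) (M i)) \<and> the (snd (separating_pfun n) (M i'))))
      \<longleftrightarrow> R02_shape m (\<lambda>_ _. True)"
    using clique by (intro R02_shape_cong) (simp add: separating_pfun_def separating_map_clique_vec)
  then show "R02_shape m (\<lambda>i i'. \<not> (the (snd (separating_pfun n) (M i)) \<and> the (snd (separating_pfun n) (M i'))))"
    by (simp add: R02_shape_def)
qed

lemma Inter_pPol_R02_subset_iff:
  assumes "X \<subseteq> Nhat" and "Y \<subseteq> Nhat"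
  shows "(\<Inter>n\<in>Y. pPol (2 * n) (R02 n)) \<subseteq> (\<Inter>n\<in>X. pPol (2 * n) (R02 n)) \<longleftrightarrow> X \<subseteq> Y"
proof
  assume sub: "(\<Inter>n\<in>Y. pPol (2 * n) (R02 n)) \<subseteq> (\<Inter>n\<in>X. pPol (2 * n) (R02 n))"
  show "X \<subseteq> Y"
  proof
    fix n assume "n \<in> X"
    show "n \<in> Y"
    proof (rule ccontr)
      assume "n \<notin> Y"
      have n: "3 \<le> n" using assms(1) \<open>n \<in> X\<close> by (auto simp: Nhat_def)
      have "separating_pfun n \<in> pPol (2 * m) (R02 m)" if "m \<in> Y" for m
      proof (rule separating_pfun_in_pPol)
        show "odd m" "3 \<le> m" using assms(2) \<open>m \<in> Y\<close> by (auto simp: Nhat_def)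
        show "2 \<le> n" using n by simp
        show "m \<noteq> n" using \<open>m \<in> Y\<close> \<open>n \<notin> Y\<close> by blast
      qed
      moreover have "separating_pfun n \<notin> pPol (2 * n) (R02 n)"
        using separating_pfun_not_in_pPol n by simp
      ultimately show False using sub \<open>n \<in> X\<close> by blast
    qed
  qed
qed blast

theorem mainTheorem17:
  fixes X Y :: "nat set"
  assumes "X \<subseteq> Nhat" and "Y \<subseteq> Nhat" and "X \<noteq> {}" and "Y \<noteq> {}"
  shows "(\<Inter>n\<in>X. pPol (2 * n) (R02 n)) = (\<Inter>m\<in>Y. pPol (2 * m) (R02 m))
         \<longleftrightarrow> X = Y"
  by (simp add: set_eq_subset Inter_pPol_R02_subset_iff[OF assms(1,2)]
      Inter_pPol_R02_subset_iff[OF assms(2,1)] conj_commute)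

end
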